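(* Let $f\ge0$ be integrable on $[-\pi,\pi]$ with $\int f>0$ and such that $\lim_{n\to\infty}\sigma_{n+1}^2(f)/\sigma_n^2(f)=1$. If $g$ is a nonnegative, bounded, measurable function on $[-\pi,\pi]$ that is continuous at $\lambda=0$, then $$\limsup_{n\to\infty}\frac{\sigma_n^2(fg)}{\sigma_n^2(f)}\le g(0).$$
   Context: For a nonnegative integrable weight $w$ on $[-\pi,\pi]$, $\sigma_n^2(w)=\min_{q\in\mathcal{Q}_n(1)}\int_{-\pi}^{\pi}|q(e^{i\lambda})|^2w(\lambda)\,d\lambda$, where $\mathcal{Q}_n(1)$ is the set of complex polynomials of degree at most $n$ with $q(1)=1$. *)

theory Defs
  imports "HOL-Analysis.Analysis" "HOL-Computational_Algebra.Polynomial"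
begin

definition Qn1 :: "nat \<Rightarrow> complex poly set" where
  "Qn1 n = {q. degree q \<le> n \<and> poly q 1 = 1}"

definition sigma2 :: "nat \<Rightarrow> (real \<Rightarrow> real) \<Rightarrow> real" where
  "sigma2 n w = (INF q \<in> Qn1 n. LINT x:{-pi..pi}|lborel. (cmod (poly q (cis x)))\<^sup>2 * w x)"

end

theory Submission
  imports Defs
begin

(* If h is a polynomial of degree k with h(1) = 1 and |h(e^{i x})|^2 g(x) <= c on [-pi, pi], then
   multiplying the admissible polynomials of degree n by h shows sigma2 (n + k) (f g) <= c sigma2 n f.
   For h = ((1 + z) / 2)^k the factor |h(e^{i x})|^2 = ((1 + cos x) / 2)^k concentrates at x = 0 as k
   grows, so by continuity of g at 0 the constant c can be taken arbitrarily close to g 0; and the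
   ratio hypothesis gives sigma2 (n + k) f / sigma2 n f --> 1 for every fixed k. *)

lemma set_integrable_mult_bounded:
  fixes f g :: "'a \<Rightarrow> real"
  assumes f: "set_integrable M A f" and g: "set_borel_measurable M A g"
    and bound: "\<forall>x\<in>A. \<bar>g x\<bar> \<le> B"
  shows "set_integrable M A (\<lambda>x. f x * g x)"
proof (rule set_integrable_bound)
  show "set_integrable M A (\<lambda>x. B * f x)"
    using f by simp
  have "(\<lambda>x. indicator A x *\<^sub>R f x) \<in> borel_measurable M"
    using f unfolding set_integrable_def by (rule borel_measurable_integrable)
  then have "(\<lambda>x. (indicator A x *\<^sub>R f x) * (indicator A x *\<^sub>R g x)) \<in> borel_measurable M"
    using g unfolding set_borel_measurable_def by measurable
  moreover have "(\<lambda>x. indicator A x *\<^sub>R (f x * g x)) =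
      (\<lambda>x. (indicator A x *\<^sub>R f x) * (indicator A x *\<^sub>R g x))"
    by (simp add: fun_eq_iff indicator_def)
  ultimately show "set_borel_measurable M A (\<lambda>x. f x * g x)"
    unfolding set_borel_measurable_def by simp
  show "AE x in M. x \<in> A \<longrightarrow> norm (f x * g x) \<le> norm (B * f x)"
  proof (intro AE_I2 impI)
    fix x assume "x \<in> A"
    then have "\<bar>g x\<bar> \<le> \<bar>B\<bar>"
      using bound by fastforce
    then show "norm (f x * g x) \<le> norm (B * f x)"
      by (simp add: abs_mult) (metis abs_ge_zero mult.commute mult_left_mono)
  qed
qed

lemma set_integrable_cmod_poly_cis_mult:
  assumes "set_integrable lborel {-pi..pi} w"
  shows "set_integrable lborel {-pi..pi} (\<lambda>x. (cmod (poly q (cis x)))\<^sup>2 * w x)"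
proof -
  have cont: "continuous_on UNIV (\<lambda>x. (cmod (poly q (cis x)))\<^sup>2)"
    by (intro continuous_intros continuous_on_poly)
  then have "compact ((\<lambda>x. (cmod (poly q (cis x)))\<^sup>2) ` {-pi..pi})"
    by (intro compact_continuous_image continuous_on_subset[OF cont]) auto
  then obtain B where bound: "\<forall>x\<in>{-pi..pi}. \<bar>(cmod (poly q (cis x)))\<^sup>2\<bar> \<le> B"
    by (force simp: bounded_iff dest: compact_imp_bounded)
  have meas: "set_borel_measurable lborel {-pi..pi} (\<lambda>x. (cmod (poly q (cis x)))\<^sup>2)"
    unfolding set_borel_measurable_def
    using borel_measurable_continuous_onI[OF cont] by measurable
  show ?thesis
    using set_integrable_mult_bounded[OF assms meas bound] by (simp add: mult.commute)
qed

lemma one_in_Qn1: "1 \<in> Qn1 n"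
  by (simp add: Qn1_def)

lemma mult_in_Qn1: "p \<in> Qn1 m \<Longrightarrow> q \<in> Qn1 n \<Longrightarrow> p * q \<in> Qn1 (m + n)"
  unfolding Qn1_def using degree_mult_le[of p q] by auto

lemma cmod_poly_cis_weight_integral_nonneg:
  assumes "\<forall>x\<in>{-pi..pi}. 0 \<le> w x"
  shows "0 \<le> (LINT x:{-pi..pi}|lborel. (cmod (poly q (cis x)))\<^sup>2 * w x)"
  unfolding set_lebesgue_integral_def
  using assms by (intro Bochner_Integration.integral_nonneg) (auto simp: indicator_def)

lemma sigma2_nonneg:
  assumes "\<forall>x\<in>{-pi..pi}. 0 \<le> w x"
  shows "0 \<le> sigma2 n w"
  unfolding sigma2_def using one_in_Qn1 cmod_poly_cis_weight_integral_nonneg[OF assms]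
  by (intro cINF_greatest) auto

lemma sigma2_le_integral:
  assumes "\<forall>x\<in>{-pi..pi}. 0 \<le> w x" and "q \<in> Qn1 n"
  shows "sigma2 n w \<le> (LINT x:{-pi..pi}|lborel. (cmod (poly q (cis x)))\<^sup>2 * w x)"
  unfolding sigma2_def using cmod_poly_cis_weight_integral_nonneg[OF assms(1)]
  by (intro cINF_lower[OF _ assms(2)] bdd_belowI[of _ 0]) auto

lemma sigma2_mult_le:
  fixes f g :: "real \<Rightarrow> real"
  assumes f_nonneg: "\<forall>x\<in>{-pi..pi}. 0 \<le> f x" and f_int: "set_integrable lborel {-pi..pi} f"
    and g_nonneg: "\<forall>x\<in>{-pi..pi}. 0 \<le> g x" and g_bound: "\<forall>x\<in>{-pi..pi}. \<bar>g x\<bar> \<le> B"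
    and g_meas: "set_borel_measurable lborel {-pi..pi} g"
    and h: "h \<in> Qn1 k" and c: "c > 0"
    and h_bound: "\<forall>x\<in>{-pi..pi}. (cmod (poly h (cis x)))\<^sup>2 * g x \<le> c"
  shows "sigma2 (n + k) (\<lambda>x. f x * g x) \<le> c * sigma2 n f"
proof -
  have fg_nonneg: "\<forall>x\<in>{-pi..pi}. 0 \<le> f x * g x"
    using f_nonneg g_nonneg by simp
  have "sigma2 (n + k) (\<lambda>x. f x * g x) / c \<le> (LINT x:{-pi..pi}|lborel. (cmod (poly q (cis x)))\<^sup>2 * f x)"
    if q: "q \<in> Qn1 n" for q
  proof -
    have "sigma2 (n + k) (\<lambda>x. f x * g x)
        \<le> (LINT x:{-pi..pi}|lborel. (cmod (poly (q * h) (cis x)))\<^sup>2 * (f x * g x))"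
      by (rule sigma2_le_integral[OF fg_nonneg mult_in_Qn1[OF q h]])
    also have "\<dots> \<le> (LINT x:{-pi..pi}|lborel. c * ((cmod (poly q (cis x)))\<^sup>2 * f x))"
    proof (rule set_integral_mono)
      show "set_integrable lborel {-pi..pi} (\<lambda>x. (cmod (poly (q * h) (cis x)))\<^sup>2 * (f x * g x))"
        by (intro set_integrable_cmod_poly_cis_mult set_integrable_mult_bounded[OF f_int g_meas g_bound])
      show "set_integrable lborel {-pi..pi} (\<lambda>x. c * ((cmod (poly q (cis x)))\<^sup>2 * f x))"
        by (intro set_integrable_mult_right set_integrable_cmod_poly_cis_mult f_int)
      fix x :: real assume x: "x \<in> {-pi..pi}"
      have "(cmod (poly (q * h) (cis x)))\<^sup>2 * (f x * g x)
          = ((cmod (poly q (cis x)))\<^sup>2 * f x) * ((cmod (poly h (cis x)))\<^sup>2 * g x)"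
        by (simp add: norm_mult power_mult_distrib)
      also have "\<dots> \<le> ((cmod (poly q (cis x)))\<^sup>2 * f x) * c"
        using x f_nonneg h_bound by (intro mult_left_mono) auto
      finally show "(cmod (poly (q * h) (cis x)))\<^sup>2 * (f x * g x) \<le> c * ((cmod (poly q (cis x)))\<^sup>2 * f x)"
        by (simp add: mult.commute)
    qed
    finally show ?thesis
      using c by (simp add: field_simps)
  qed
  then have "sigma2 (n + k) (\<lambda>x. f x * g x) / c \<le> sigma2 n f"
    unfolding sigma2_def[of n f] using one_in_Qn1 by (intro cINF_greatest) auto
  then show ?thesis
    using c by (simp add: field_simps)
qed

lemma cmod_poly_half_power_cis:
  "(cmod (poly ([:1/2, 1/2:] ^ k) (cis x)))\<^sup>2 = ((1 + cos x) / 2) ^ k"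
proof -
  have "(cmod ((1 + cis x) / 2))\<^sup>2 = ((1 + cos x)\<^sup>2 + (sin x)\<^sup>2) / 4"
    by (simp add: cmod_power2 power_divide)
  also have "\<dots> = (1 + cos x) / 2"
    by (simp add: sin_squared_eq power2_sum field_simps)
  finally have half: "(cmod ((1 + cis x) / 2))\<^sup>2 = (1 + cos x) / 2" .
  have "poly ([:1/2, 1/2:] ^ k) (cis x) = ((1 + cis x) / 2) ^ k"
    by (simp add: add_divide_distrib)
  then have "(cmod (poly ([:1/2, 1/2:] ^ k) (cis x)))\<^sup>2 = (cmod ((1 + cis x) / 2) ^ k)\<^sup>2"
    by (simp only: norm_power)
  also have "\<dots> = ((cmod ((1 + cis x) / 2))\<^sup>2) ^ k"
    by (metis power_mult mult.commute)
  finally show ?thesis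
    by (simp only: half)
qed

lemma half_power_in_Qn1: "[:1/2, 1/2:] ^ k \<in> Qn1 k"
  unfolding Qn1_def using degree_power_le[of "[:1/2, 1/2::complex:]" k] by simp

lemma cos_half_power_mult_le:
  fixes g :: "real \<Rightarrow> real"
  assumes g_nonneg: "\<forall>x\<in>{-pi..pi}. 0 \<le> g x" and g_bound: "\<forall>x\<in>{-pi..pi}. \<bar>g x\<bar> \<le> B"
    and g_cont: "continuous (at 0 within {-pi..pi}) g" and e: "e > 0"
  obtains k where "\<forall>x\<in>{-pi..pi}. ((1 + cos x) / 2) ^ k * g x \<le> g 0 + e"
proof -
  have g0: "0 \<le> g 0"
    using g_nonneg[rule_format, of 0] by simp
  obtain \<delta> where \<delta>: "\<delta> > 0" "\<forall>x\<in>{-pi..pi}. \<bar>x\<bar> < \<delta> \<longrightarrow> \<bar>g x - g 0\<bar> < e"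
    using g_cont e unfolding continuous_within_eps_delta dist_real_def by force
  define d where "d = min \<delta> pi"
  define \<rho> where "\<rho> = (1 + cos d) / 2"
  have "0 \<le> 1 + cos d"
    using cos_ge_minus_one[of d] by linarith
  then have \<rho>_nonneg: "0 \<le> \<rho>"
    unfolding \<rho>_def by simp
  have "cos d < cos 0"
    using \<delta>(1) unfolding d_def by (intro cos_monotone_0_pi) auto
  then have "\<rho> < 1"
    unfolding \<rho>_def by simp
  moreover have "0 < e / (\<bar>B\<bar> + 1)"
    using e by simp
  ultimately obtain k where k: "\<rho> ^ k < e / (\<bar>B\<bar> + 1)"
    using real_arch_pow_inv by blast
  have "((1 + cos x) / 2) ^ k * g x \<le> g 0 + e" if x: "x \<in> {-pi..pi}" for x
  proof -
    have gx: "0 \<le> g x" "g x \<le> \<bar>B\<bar>"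
      using x g_nonneg g_bound by fastforce+
    have "0 \<le> 1 + cos x" "cos x \<le> 1"
      using cos_ge_minus_one[of x] cos_le_one[of x] by linarith+
    then have base: "0 \<le> (1 + cos x) / 2" "(1 + cos x) / 2 \<le> 1"
      by simp_all
    show ?thesis
    proof (cases "\<bar>x\<bar> < d")
      case True
      then have "g x < g 0 + e"
        using \<delta>(2) x unfolding d_def by auto
      moreover have "((1 + cos x) / 2) ^ k * g x \<le> g x"
        using base gx by (simp add: mult_left_le_one_le power_le_one)
      ultimately show ?thesis
        by linarith
    next
      case False
      have "\<bar>x\<bar> \<le> pi"
        using x by auto
      then have "cos \<bar>x\<bar> \<le> cos d"
        using False \<delta>(1) unfolding d_def by (intro cos_monotone_0_pi_le) auto
      then have "((1 + cos x) / 2) ^ k \<le> \<rho> ^ k"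
        using base unfolding \<rho>_def by (intro power_mono) auto
      then have "((1 + cos x) / 2) ^ k * g x \<le> \<rho> ^ k * (\<bar>B\<bar> + 1)"
        using gx \<rho>_nonneg by (intro mult_mono) auto
      also have "\<dots> < e"
        using k by (simp add: field_simps)
      finally show ?thesis
        using g0 by linarith
    qed
  qed
  then show ?thesis
    using that by blast
qed

lemma ratio_shift_tendsto_one:
  fixes s :: "nat \<Rightarrow> 'a::real_normed_field"
  assumes ratio: "(\<lambda>n. s (Suc n) / s n) \<longlonglongrightarrow> 1"
  shows "(\<lambda>n. s (n + k) / s n) \<longlonglongrightarrow> 1"
proof -
  have "eventually (\<lambda>n. s (Suc n) / s n \<noteq> 0) sequentially"
    by (rule tendsto_imp_eventually_ne[OF ratio]) simp
  then have nonzero: "eventually (\<lambda>n. s n \<noteq> 0) sequentially"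
    by (rule eventually_mono) auto
  show ?thesis
  proof (induction k)
    case 0
    show ?case
      using nonzero by (intro tendsto_eventually) (auto elim: eventually_mono)
  next
    case (Suc k)
    have "(\<lambda>n. s (Suc (n + k)) / s (n + k) * (s (n + k) / s n)) \<longlonglongrightarrow> 1"
      using tendsto_mult[OF LIMSEQ_ignore_initial_segment[OF ratio, of k] Suc.IH] by simp
    moreover have "eventually (\<lambda>n. s (n + k) \<noteq> 0) sequentially"
      using nonzero eventually_sequentially_seg[of "\<lambda>n. s n \<noteq> 0" k] by simp
    then have "eventually (\<lambda>n. s (Suc (n + k)) / s (n + k) * (s (n + k) / s n) = s (n + Suc k) / s n) sequentially"
      by (rule eventually_mono) simp
    ultimately show ?case
      by (rule Lim_transform_eventually)
  qed
qed

lemma limsup_ratio_le_of_shifted_bound: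
  fixes s t :: "nat \<Rightarrow> real"
  assumes s_nonneg: "\<And>n. 0 \<le> s n" and ratio: "(\<lambda>n. s (Suc n) / s n) \<longlonglongrightarrow> 1"
    and bound: "\<And>n. t (n + k) \<le> c * s n"
  shows "limsup (\<lambda>n. ereal (t n / s n)) \<le> ereal c"
proof -
  have "limsup (\<lambda>n. ereal (t n / s n)) = limsup (\<lambda>n. ereal (t (n + k) / s (n + k)))"
    by (rule limsup_shift_k[symmetric])
  also have "\<dots> \<le> limsup (\<lambda>n. ereal (c * (s n / s (n + k))))"
    using divide_right_mono[OF bound s_nonneg] by (intro Limsup_mono always_eventually) simp
  also have "\<dots> = ereal c"
  proof (rule lim_imp_Limsup)
    have "(\<lambda>n. s n / s (n + k)) \<longlonglongrightarrow> 1"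
      using tendsto_inverse[OF ratio_shift_tendsto_one[OF ratio, of k]] by simp
    then have "(\<lambda>n. c * (s n / s (n + k))) \<longlonglongrightarrow> c"
      by (metis mult.right_neutral tendsto_mult_left)
    then show "(\<lambda>n. ereal (c * (s n / s (n + k)))) \<longlonglongrightarrow> ereal c"
      by (rule tendsto_ereal)
  qed simp
  finally show ?thesis .
qed

theorem lemma5p4:
  fixes f g :: "real \<Rightarrow> real"
  assumes f_nonneg: "\<forall>x\<in>{-pi..pi}. f x \<ge> 0"
    and f_int: "set_integrable lborel {-pi..pi} f"
    and f_pos: "(LINT x:{-pi..pi}|lborel. f x) > 0"
    and f_ratio: "(\<lambda>n. sigma2 (Suc n) f / sigma2 n f) \<longlonglongrightarrow> 1"
    and g_nonneg: "\<forall>x\<in>{-pi..pi}. g x \<ge> 0"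
    and g_bdd: "bounded (g ` {-pi..pi})"
    and g_meas: "set_borel_measurable lborel {-pi..pi} g"
    and g_cont: "continuous (at 0 within {-pi..pi}) g"
  shows "limsup (\<lambda>n. ereal (sigma2 n (\<lambda>x. f x * g x) / sigma2 n f)) \<le> ereal (g 0)"
proof (rule ereal_le_epsilon2)
  fix e :: real assume e: "0 < e"
  obtain B where g_bound: "\<forall>x\<in>{-pi..pi}. \<bar>g x\<bar> \<le> B"
    using g_bdd unfolding bounded_iff by auto
  obtain k where k: "\<forall>x\<in>{-pi..pi}. ((1 + cos x) / 2) ^ k * g x \<le> g 0 + e"
    using cos_half_power_mult_le[OF g_nonneg g_bound g_cont e] .
  have "g 0 + e > 0"
    using g_nonneg[rule_format, of 0] e by simp
  then have "sigma2 (n + k) (\<lambda>x. f x * g x) \<le> (g 0 + e) * sigma2 n f" for n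
    using k by (intro sigma2_mult_le[OF f_nonneg f_int g_nonneg g_bound g_meas half_power_in_Qn1])
      (simp_all only: cmod_poly_half_power_cis)
  then have "limsup (\<lambda>n. ereal (sigma2 n (\<lambda>x. f x * g x) / sigma2 n f)) \<le> ereal (g 0 + e)"
    by (rule limsup_ratio_le_of_shifted_bound[OF sigma2_nonneg[OF f_nonneg] f_ratio])
  then show "limsup (\<lambda>n. ereal (sigma2 n (\<lambda>x. f x * g x) / sigma2 n f)) \<le> ereal (g 0) + ereal e"
    by simp
qed

end
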